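(* Let $q=p^n$, $p>2$ prime, $g\ge1$ with $\gcd(p,g)=1$, and let $C: y^2=x^{2g+1}+ax^{g+1}+bx$ be a genus $g$ hyperelliptic curve over $\mathbb{F}_q$ ($b\ne0$). Let $m=\frac{p-1}{2}$, let $W=(w_{i,j}(a,b))_{1\le i,j\le g}$ be the Cartier–Manin matrix of $C$, and fix $\sqrt b\in\mathbb{F}_{q^2}$. Then for $1\le i,j\le g$: 1. if $ip-j\equiv m\pmod g$, then $$w_{i,j}(a,b)=\sqrt{b}^{\,2m+\frac{m-(ip-j)}{g}}\; w_{i,j}\!\left(\tfrac{a}{\sqrt b},1\right)=\sqrt{b}^{\,2m+\frac{m-(ip-j)}{g}}\;P_{\frac{ip-j}{g}-\frac{p-1}{2g}}\!\left(-\frac{a}{2\sqrt b}\right),$$ where $w_{i,j}(\frac{a}{\sqrt b},1)$ denotes the corresponding entry of the Cartier–Manin matrix of $y^2=x^{2g+1}+\frac{a}{\sqrt b}x^{g+1}+x$, and the equality holds in $\mathbb{F}_{q^2}$ (and the value lies in $\mathbb{F}_q$); 2. otherwise $w_{i,j}(a,b)=0$.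
   Context: For a hyperelliptic curve $y^2=f(x)$ with $f$ monic of degree $2g+1$ over a field of characteristic $p>2$, write $f(x)^{(p-1)/2}=\sum_k c_k x^k$; the Cartier–Manin matrix is $W=(w_{i,j})_{1\le i,j\le g}$ with $w_{i,j}=c_{ip-j}$. $P_n$ denotes the $n$-th Legendre polynomial (its coefficients have only powers of 2 in denominators, so it is reduced modulo $p$). The notation $\sqrt b^{\,e}$ means the $e$-th power of the fixed element $\sqrt b$ (here $e$ is an integer). *)

theory Defs
  imports "HOL-Computational_Algebra.Polynomial" "HOL-Number_Theory.Cong" "HOL-Library.Cardinality"
begin

definition hyp_poly :: "nat \<Rightarrow> 'a::comm_ring_1 \<Rightarrow> 'a \<Rightarrow> 'a poly" where
  "hyp_poly g a b = monom 1 (2*g+1) + monom a (g+1) + monom b 1"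

definition cm_coeff :: "nat \<Rightarrow> 'a::comm_ring_1 poly \<Rightarrow> int \<Rightarrow> 'a" where
  "cm_coeff p f k = (if k < 0 then 0 else coeff (f ^ ((p - 1) div 2)) (nat k))"

definition cartier_manin_entry :: "nat \<Rightarrow> 'a::comm_ring_1 poly \<Rightarrow> nat \<Rightarrow> nat \<Rightarrow> 'a" where
  "cartier_manin_entry p f i j = cm_coeff p f (int i * int p - int j)"

text \<open>Legendre polynomial P_n via the explicit formula
  P_n(x) = 2^(-n) * sum_k (n choose k)^2 (x-1)^(n-k) (x+1)^k,
  interpreted in any field in which 2 is invertible (e.g. characteristic p > 2).\<close>
definition legendre_poly :: "nat \<Rightarrow> 'a::field poly" where
  "legendre_poly n = smult (inverse (2 ^ n))
     (\<Sum>k\<le>n. smult (of_nat ((n choose k)^2)) ([:-1, 1:] ^ (n - k) * [:1, 1:] ^ k))"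

end

theory Submission
  imports Defs
begin

text \<open>
  Write f = x Q(x^g) with Q = T^2 + a T + b. Then f^m = x^m Q(x^g)^m, so the coefficient
  c_(ip-j) of f^m vanishes unless ip - j = m + g t, and then it is the coefficient of T^t in Q^m.
  Substituting T := sqrt b T turns Q into b (T^2 + (a / sqrt b) T + 1), producing the factor
  (sqrt b)^(2m - t).

  Writing T^2 + c T + 1 = (c + 2) T + (T - 1)^2 and expanding its m-th power binomially, the
  congruence m = -1/2 (mod p) turns the binomial coefficients that occur into those of
  P_t(x) = sum_k (t choose k) (t + k choose k) ((x - 1)/2)^k, evaluated at x = -c/2.

  The entries lie in F_q because the coefficients of Q are fixed by the ring endomorphism x ^ q.
\<close>

lemma pcompose_power_left: "pcompose (p ^ n) q = pcompose p q ^ n"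
  for p q :: "'a::comm_semiring_1 poly"
  by (induction n) (simp_all add: pcompose_mult pcompose_1)

lemma coeff_linear_poly_power':
  fixes a b :: "'a::comm_semiring_1"
  shows "coeff ([:a, b:] ^ n) i = of_nat (n choose i) * b ^ i * a ^ (n - i)"
proof (cases "i \<le> n")
  case False
  have "degree ([:a, b:] ^ n) \<le> n"
    using degree_power_le[of "[:a, b:]" n] by (simp split: if_splits)
  then show ?thesis
    using False by (simp add: coeff_eq_0 binomial_eq_0)
qed (rule coeff_linear_poly_power)

lemma coeff_pcompose_monom:
  fixes P :: "'a::comm_semiring_1 poly"
  assumes "g > 0"
  shows "coeff (pcompose P (monom 1 g)) r = (if g dvd r then coeff P (r div g) else 0)"
proof (induction P arbitrary: r)
  case (pCons c P)
  have "coeff (pcompose (pCons c P) (monom 1 g)) r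
      = (if r = 0 then c else 0) + (if r < g then 0 else coeff (pcompose P (monom 1 g)) (r - g))"
    by (cases r) (simp_all add: pcompose_pCons coeff_monom_mult)
  also have "\<dots> = (if g dvd r then coeff (pCons c P) (r div g) else 0)"
    using assms pCons.IH[of "r - g"]
    by (auto simp: coeff_pCons dvd_minus_self le_div_geq dest: dvd_imp_le split: nat.split)
  finally show ?case .
qed simp

lemma hyp_poly_eq_pcompose:
  fixes a b :: "'a::comm_ring_1"
  shows "hyp_poly g a b = monom 1 1 * pcompose [:b, a, 1:] (monom 1 g)"
proof -
  have "pcompose [:b, a, 1:] (monom 1 g) = monom b 0 + monom a g + monom 1 (2 * g)"
    by (simp add: pcompose_pCons monom_0 mult_monom smult_monom algebra_simps mult_2 mult_2_right)
  then show ?thesis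
    by (simp add: hyp_poly_def mult_monom algebra_simps)
qed

lemma coeff_hyp_poly_power:
  fixes a b :: "'a::comm_ring_1"
  assumes "g > 0"
  shows "coeff (hyp_poly g a b ^ m) r =
    (if m \<le> r \<and> g dvd (r - m) then coeff ([:b, a, 1:] ^ m) ((r - m) div g) else 0)"
proof -
  have "hyp_poly g a b ^ m = monom 1 m * pcompose ([:b, a, 1:] ^ m) (monom 1 g)"
    by (simp add: hyp_poly_eq_pcompose power_mult_distrib monom_power pcompose_power_left)
  then show ?thesis
    using assms by (simp add: coeff_monom_mult coeff_pcompose_monom)
qed

lemma cm_coeff_hyp_poly:
  fixes a b :: "'a::comm_ring_1" and p :: nat and k :: int
  assumes "g > 0"
  defines "m \<equiv> (p - 1) div 2"
  shows "cm_coeff p (hyp_poly g a b) k =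
    (if int m \<le> k \<and> [k = int m] (mod int g)
     then coeff ([:b, a, 1:] ^ m) (nat ((k - int m) div int g)) else 0)"
proof -
  have cm: "cm_coeff p f k = (if k < 0 then 0 else coeff (f ^ m) (nat k))" for f :: "'a poly"
    by (simp add: cm_coeff_def m_def)
  show ?thesis
  proof (cases "int m \<le> k")
    case True
    then have "g dvd (nat k - m) \<longleftrightarrow> [k = int m] (mod int g)"
      by (simp add: cong_iff_dvd_diff flip: int_dvd_int_iff)
    moreover have "(nat k - m) div g = nat ((k - int m) div int g)"
      using True by (simp add: nat_div_distrib nat_diff_distrib')
    ultimately show ?thesis
      using True assms(1) by (simp add: cm coeff_hyp_poly_power le_nat_iff)
  qed (use assms(1) in \<open>auto simp: cm coeff_hyp_poly_power le_nat_iff\<close>)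
qed

lemma coeff_quadratic_power_rescale:
  fixes a s :: "'a::field"
  assumes "s \<noteq> 0"
  shows "coeff ([:s ^ 2, a, 1:] ^ m) t = s powi (2 * int m - int t) * coeff ([:1, a / s, 1:] ^ m) t"
proof -
  have "[:s ^ 2, a, 1:] = smult (s ^ 2) (pcompose [:1, a / s, 1:] [:0, inverse s:])"
    using assms by (simp add: pcompose_pCons power2_eq_square field_simps)
  then have "coeff ([:s ^ 2, a, 1:] ^ m) t = s ^ (2 * m) * inverse s ^ t * coeff ([:1, a / s, 1:] ^ m) t"
    by (simp add: smult_power coeff_pcompose_linear mult_ac flip: pcompose_power_left power_mult)
  also have "s ^ (2 * m) * inverse s ^ t = s powi (int (2 * m) - int t)"
    using assms by (simp add: power_int_diff power_inverse divide_inverse del: of_nat_mult)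
  finally show ?thesis
    by simp
qed

text \<open>Both sides are the coefficient of \<open>X\<^sup>t\<close> in
  \<open>((w + 1) X + w)\<^sup>t (X + 1)\<^sup>t = (w (X + 1)\<^sup>2 + X (X + 1))\<^sup>t\<close>.\<close>

lemma sum_choose_squared_powers:
  fixes w :: "'a::comm_ring_1"
  shows "(\<Sum>k\<le>t. of_nat ((t choose k)^2) * w ^ (t - k) * (w + 1) ^ k)
       = (\<Sum>k\<le>t. of_nat ((t choose k) * (t + k choose k)) * w ^ k)"
proof -
  define Z :: "'a poly" where "Z = [:1, 1:]"
  define Q where "Q = [:w, w + 1:]"
  have coeff_Z: "coeff (Z ^ n) i = of_nat (n choose i)" for n i
    unfolding Z_def by (simp add: coeff_linear_poly_power')
  have "coeff ((Q * Z) ^ t) t = (\<Sum>i\<le>t. coeff (Q ^ t) i * coeff (Z ^ t) (t - i))"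
    by (simp add: power_mult_distrib coeff_mult)
  also have "\<dots> = (\<Sum>k\<le>t. of_nat ((t choose k)^2) * w ^ (t - k) * (w + 1) ^ k)"
    by (intro sum.cong refl)
       (auto simp: Q_def coeff_Z coeff_linear_poly_power' binomial_symmetric[symmetric]
          power2_eq_square algebra_simps)
  finally have lhs: "coeff ((Q * Z) ^ t) t = (\<Sum>k\<le>t. of_nat ((t choose k)^2) * w ^ (t - k) * (w + 1) ^ k)" .
  have "Q * Z = smult w (Z ^ 2) + monom 1 1 * Z"
    unfolding Q_def Z_def by (simp add: power2_eq_square monom_Suc algebra_simps)
  then have "(Q * Z) ^ t = (\<Sum>k\<le>t. of_nat (t choose k) * (smult w (Z ^ 2)) ^ k * (monom 1 1 * Z) ^ (t - k))"
    by (simp add: binomial_ring)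
  also have "\<dots> = (\<Sum>k\<le>t. smult (of_nat (t choose k) * w ^ k) (monom 1 (t - k) * Z ^ (t + k)))"
  proof (intro sum.cong refl)
    fix k assume "k \<in> {..t}"
    then have "Z ^ (k * 2) * Z ^ (t - k) = Z ^ (t + k)"
      by (simp add: add.commute flip: power_add)
    then show "of_nat (t choose k) * (smult w (Z ^ 2)) ^ k * (monom 1 1 * Z) ^ (t - k)
      = smult (of_nat (t choose k) * w ^ k) (monom 1 (t - k) * Z ^ (t + k))"
      by (simp add: smult_power power_mult_distrib monom_power of_nat_mult_conv_smult mult_ac
          flip: power_mult)
  qed
  finally have "coeff ((Q * Z) ^ t) t
      = (\<Sum>k\<le>t. of_nat (t choose k) * w ^ k * coeff (monom 1 (t - k) * Z ^ (t + k)) t)"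
    by (simp add: coeff_sum)
  also have "\<dots> = (\<Sum>k\<le>t. of_nat ((t choose k) * (t + k choose k)) * w ^ k)"
    by (intro sum.cong refl) (auto simp: coeff_monom_mult coeff_Z algebra_simps)
  finally show ?thesis
    using lhs by simp
qed

lemma poly_legendre_poly:
  fixes x :: "'a::field"
  assumes "(2::'a) \<noteq> 0"
  shows "poly (legendre_poly t) x = (\<Sum>k\<le>t. of_nat ((t choose k) * (t + k choose k)) * ((x - 1) / 2) ^ k)"
proof -
  define w where "w = (x - 1) / 2"
  have x: "x - 1 = 2 * w" "x + 1 = 2 * (w + 1)"
    using assms by (auto simp: w_def field_simps)
  have "poly (legendre_poly t) x
      = (\<Sum>k\<le>t. inverse (2 ^ t) * (of_nat ((t choose k)^2) * (x - 1) ^ (t - k) * (x + 1) ^ k))"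
    by (simp add: legendre_poly_def poly_sum sum_distrib_left algebra_simps)
  also have "\<dots> = (\<Sum>k\<le>t. of_nat ((t choose k)^2) * w ^ (t - k) * (w + 1) ^ k)"
  proof (intro sum.cong refl)
    fix k assume "k \<in> {..t}"
    then have "(2::'a) ^ (t - k) * 2 ^ k = 2 ^ t"
      by (simp flip: power_add)
    then show "inverse (2 ^ t) * (of_nat ((t choose k)^2) * (x - 1) ^ (t - k) * (x + 1) ^ k)
       = of_nat ((t choose k)^2) * w ^ (t - k) * (w + 1) ^ k"
      using assms unfolding x power_mult_distrib by (simp add: field_simps)
  qed
  also have "\<dots> = (\<Sum>k\<le>t. of_nat ((t choose k) * (t + k choose k)) * w ^ k)"
    by (rule sum_choose_squared_powers)
  finally show ?thesis
    by (simp add: w_def)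
qed

lemma of_nat_neq_0_below_char:
  assumes "0 < n" "n < CHAR('a::semiring_1)"
  shows "(of_nat n :: 'a) \<noteq> 0"
  using assms by (auto simp: of_nat_eq_0_iff_char_dvd dest: dvd_imp_le)

lemma of_nat_choose_eq_0_char:
  assumes "CHAR('a::field) = p" "a < p" "b < p" "p \<le> a + b"
  shows "(of_nat (a + b choose a) :: 'a) = 0"
proof -
  have "prime p"
    using assms prime_CHAR_semidom[where 'a='a] by simp
  have "fact a * fact b * (a + b choose a) = fact (a + b)"
    using binomial_fact_lemma[of a "a + b"] by simp
  moreover have "p dvd fact (a + b)" "\<not> p dvd fact a * fact b"
    using assms \<open>prime p\<close> by (auto simp: prime_dvd_fact_iff prime_dvd_mult_iff)
  ultimately have "p dvd (a + b choose a)"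
    using \<open>prime p\<close> by (metis prime_dvd_mult_iff)
  then show ?thesis
    using assms(1) by (simp add: of_nat_eq_0_iff_char_dvd)
qed

lemma Suc_times_choose_Suc: "Suc k * (n choose Suc k) = (n - k) * (n choose k)"
  by (metis binomial_absorb_comp binomial_absorption)

lemma Suc_times_central_binomial:
  "Suc k * (2 * Suc k choose Suc k) = 2 * (2 * k + 1) * (2 * k choose k)"
proof -
  have "Suc k * (2 * Suc k choose Suc k) = Suc (2 * k + 1) * (2 * k + 1 choose k)"
    using Suc_times_binomial[of k "2 * k + 1"] by simp
  also have "\<dots> = 2 * ((2 * k + 1 - k) * (2 * k + 1 choose k))"
    by simp
  also have "\<dots> = 2 * (2 * k + 1) * (2 * k choose k)"
    using binomial_absorb_comp[of "2 * k + 1" k] by simp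
  finally show ?thesis .
qed

text \<open>As \<open>m \<equiv> -1/2\<close> modulo the characteristic, this is
  \<open>(-1/2 gchoose k) (-4)\<^sup>k = (2k choose k)\<close>.\<close>

lemma of_nat_choose_half_char:
  assumes char: "CHAR('a::field) = 2 * m + 1" and "k \<le> m"
  shows "(of_nat (m choose k) :: 'a) * (-4) ^ k = of_nat (2 * k choose k)"
  using assms(2)
proof (induction k)
  case (Suc k)
  have nonzero: "(of_nat (Suc k) :: 'a) \<noteq> 0"
    by (rule of_nat_neq_0_below_char) (use Suc.prems char in auto)
  have half: "(of_nat m :: 'a) * 2 = -1"
    using of_nat_CHAR[where 'a='a] unfolding char by (simp add: eq_neg_iff_add_eq_0 algebra_simps)
  have "(of_nat (m - k) :: 'a) * (-4) = - 2 * (of_nat m * 2) + 4 * of_nat k"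
    using Suc.prems by (simp add: of_nat_diff algebra_simps)
  also have "\<dots> = of_nat (2 * (2 * k + 1))"
    unfolding half by simp
  finally have factor: "(of_nat (m - k) :: 'a) * (-4) = of_nat (2 * (2 * k + 1))" .
  have "of_nat (Suc k) * ((of_nat (m choose Suc k) :: 'a) * (-4) ^ Suc k)
      = of_nat (Suc k * (m choose Suc k)) * (-4) ^ Suc k"
    by (simp only: of_nat_mult mult_ac)
  also have "\<dots> = of_nat (m - k) * (-4) * (of_nat (m choose k) * (-4) ^ k)"
    by (simp only: Suc_times_choose_Suc of_nat_mult) (simp add: mult_ac)
  also have "\<dots> = of_nat (Suc k) * of_nat (2 * Suc k choose Suc k)"
    using Suc by (simp only: factor flip: of_nat_mult Suc_times_central_binomial)
  finally show ?case
    using nonzero by (metis mult_left_cancel)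
qed simp

text \<open>As \<open>2m - j \<equiv> -(j + 1)\<close> modulo the characteristic, this is
  \<open>(-(j + 1) gchoose r) = (-1)\<^sup>r (j + r choose r)\<close>.\<close>

lemma of_nat_choose_reflect_char:
  assumes char: "CHAR('a::field) = 2 * m + 1" and "j + r \<le> 2 * m"
  shows "(-1) ^ r * (of_nat (2 * m - j choose r) :: 'a) = of_nat (j + r choose r)"
  using assms(2)
proof (induction r)
  case (Suc r)
  have nonzero: "(of_nat (Suc r) :: 'a) \<noteq> 0"
    by (rule of_nat_neq_0_below_char) (use Suc.prems char in auto)
  have "(of_nat (2 * m - j - r) :: 'a) + of_nat (j + r + 1) = 0"
    using of_nat_CHAR[where 'a='a] Suc.prems unfolding char by (simp add: algebra_simps flip: of_nat_add)
  then have factor: "- (of_nat (2 * m - j - r) :: 'a) = of_nat (Suc (j + r))"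
    by (simp add: neg_eq_iff_add_eq_0 add_ac)
  have "of_nat (Suc r) * ((-1) ^ Suc r * (of_nat (2 * m - j choose Suc r) :: 'a))
      = (-1) ^ Suc r * of_nat (Suc r * (2 * m - j choose Suc r))"
    by (simp only: of_nat_mult mult_ac)
  also have "\<dots> = - of_nat (2 * m - j - r) * ((-1) ^ r * of_nat (2 * m - j choose r))"
    by (simp only: Suc_times_choose_Suc of_nat_mult) (simp add: algebra_simps)
  also have "\<dots> = of_nat (Suc r) * of_nat (j + Suc r choose Suc r)"
    using Suc by (simp only: factor flip: of_nat_mult Suc_times_binomial) simp
  finally show ?case
    using nonzero by (metis mult_left_cancel)
qed simp

lemma central_binomial_mult_choose:
  assumes "k \<le> t"
  shows "(2 * k choose k) * (t + k choose (t - k)) = (t choose k) * (t + k choose k)"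
proof -
  have "t + k choose (t - k) = t + k choose (2 * k)"
    using binomial_symmetric[of "2 * k" "t + k"] assms by (simp add: add.commute)
  moreover have "(t + k choose (2 * k)) * (2 * k choose k) = (t + k choose k) * (t choose k)"
    using choose_mult[of k "2 * k" "t + k"] assms by simp
  ultimately show ?thesis
    by (simp add: mult.commute)
qed

lemma coeff_quadratic_power_term_char:
  assumes char: "CHAR('a::field) = 2 * m + 1" and "k \<le> m" "k \<le> t" "t \<le> 2 * m"
  shows "(of_nat (m choose k) :: 'a) * (-4) ^ k * coeff ([:-1, 1:] ^ (2 * (m - k))) (t - k)
       = of_nat ((t choose k) * (t + k choose k))"
proof (cases "t + k \<le> 2 * m")
  case True
  have "coeff ([:-1, 1:] ^ (2 * (m - k))) (t - k) = (-1) ^ (t - k) * (of_nat (2 * m - 2 * k choose (t - k)) :: 'a)"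
    using True by (simp add: coeff_linear_poly_power' minus_one_power_iff right_diff_distrib')
  also have "\<dots> = of_nat (t + k choose (t - k))"
    using of_nat_choose_reflect_char[OF char, of "2 * k" "t - k"] True assms(3) by (simp add: add.commute)
  finally show ?thesis
    using of_nat_choose_half_char[OF char assms(2)] central_binomial_mult_choose[OF assms(3)]
    by (simp flip: of_nat_mult)
next
  case False
  then have "2 * (m - k) < t - k"
    using assms by simp
  moreover have "(of_nat (k + t choose k) :: 'a) = 0"
    by (rule of_nat_choose_eq_0_char[OF char]) (use assms False in auto)
  ultimately show ?thesis
    by (simp add: coeff_linear_poly_power' binomial_eq_0 add.commute)
qed

lemma coeff_quadratic_power_legendre:
  fixes c :: "'a::field"
  assumes char: "CHAR('a) = 2 * m + 1" and "t \<le> 2 * m"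
  shows "coeff ([:1, c, 1:] ^ m) t = poly (legendre_poly t) (- c / 2)"
proof -
  define w where "w = (- c / 2 - 1) / 2"
  define f where "f k = of_nat ((t choose k) * (t + k choose k)) * w ^ k" for k
  define L :: "'a poly" where "L = [:-1, 1:]"
  have "m \<noteq> 0"
    using char CHAR_not_1[where 'a='a] by auto
  then have two: "(2::'a) \<noteq> 0"
    using of_nat_neq_0_below_char[of 2, where 'a='a] char by simp
  then have "(4::'a) \<noteq> 0"
    using mult_eq_0_iff[of "2::'a" 2] by simp
  then have cw: "c + 2 = (-4) * w"
    using two by (simp add: w_def field_simps)
  have "[:1, c, 1:] = monom (c + 2) 1 + L ^ 2"
    by (simp add: L_def monom_Suc monom_0 power2_eq_square)
  then have "[:1, c, 1:] ^ m = (\<Sum>k\<le>m. of_nat (m choose k) * monom (c + 2) 1 ^ k * (L ^ 2) ^ (m - k))"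
    by (simp add: binomial_ring)
  also have "\<dots> = (\<Sum>k\<le>m. monom (of_nat (m choose k) * (c + 2) ^ k) k * L ^ (2 * (m - k)))"
    by (simp add: monom_power of_nat_mult_conv_smult smult_monom mult.assoc flip: power_mult)
  finally have "coeff ([:1, c, 1:] ^ m) t = (\<Sum>k\<le>m. if k \<le> t then
      of_nat (m choose k) * (c + 2) ^ k * coeff (L ^ (2 * (m - k))) (t - k) else 0)"
    by (auto simp: coeff_sum coeff_monom_mult intro!: sum.cong)
  also have "\<dots> = (\<Sum>k\<le>m. if k \<le> t then f k else 0)"
  proof (intro sum.cong refl)
    fix k assume "k \<in> {..m}"
    moreover have "(c + 2) ^ k = (-4) ^ k * w ^ k"
      unfolding cw by (rule power_mult_distrib)
    ultimately show "(if k \<le> t then of_nat (m choose k) * (c + 2) ^ k * coeff (L ^ (2 * (m - k))) (t - k) else 0)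
        = (if k \<le> t then f k else 0)"
      using coeff_quadratic_power_term_char[OF char _ _ assms(2), of k]
      by (simp add: f_def L_def mult_ac)
  qed
  also have "\<dots> = sum f ({..m} \<inter> {..t})"
    by (subst sum.inter_restrict) simp_all
  also have "\<dots> = sum f {..t}"
  proof (rule sum.mono_neutral_left)
    show "\<forall>k\<in>{..t} - {..m} \<inter> {..t}. f k = 0"
      using of_nat_choose_eq_0_char[OF char, of _ t] assms(2)
      by (auto simp: f_def add.commute)
  qed auto
  also have "\<dots> = poly (legendre_poly t) (- c / 2)"
    using poly_legendre_poly[OF two] by (simp add: f_def w_def)
  finally show ?thesis .
qed

lemma coeff_power_frobenius_fixed:
  fixes P :: "'a::comm_semiring_1 poly"
  assumes "prime CHAR('a)" "q = CHAR('a) ^ e" and fixed: "\<And>k. coeff P k ^ q = coeff P k"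
  shows "coeff (P ^ n) k ^ q = coeff (P ^ n) k"
proof (induction n arbitrary: k)
  case 0
  have "q > 0"
    using assms(1,2) prime_gt_0_nat by simp
  then show ?case
    by (simp add: coeff_1 zero_power)
next
  case (Suc n)
  then show ?case
    using assms(1,2) fixed
    by (simp add: coeff_mult freshmans_dream_sum' power_mult_distrib)
qed

lemma cartier_manin_index_decompose:
  fixes i j g p m :: nat
  assumes "p = 2 * m + 1" "1 \<le> i" "i \<le> g" "1 \<le> j" "j \<le> g"
    and "[int i * int p - int j = int m] (mod int g)"
  obtains t where "t \<le> 2 * m" "int i * int p - int j = int m + int g * int t"
proof -
  obtain T where T: "int i * int p - int j - int m = int g * T"
    using assms(6) by (auto simp: cong_iff_dvd_diff elim!: dvdE)
  have "int p \<le> int i * int p" "int i * int p \<le> int g * int p"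
    using assms(2,3) mult_right_mono[of 1 "int i" "int p"] mult_right_mono[of "int i" "int g" "int p"]
    by simp_all
  moreover have "int p = 2 * int m + 1"
    using assms(1) by simp
  ultimately have "int g * (-1) < int g * T" "int g * T < int g * int p"
    using T assms(4,5) by linarith+
  moreover have "int g > 0"
    using assms(2,3) by simp
  ultimately have "-1 < T" "T < int p"
    by (simp_all only: mult_less_cancel_left_pos)
  then have "0 \<le> T" "T \<le> 2 * int m"
    using \<open>int p = 2 * int m + 1\<close> by simp_all
  then show ?thesis
    using T by (intro that[of "nat T"]) simp_all
qed

theorem theorem4:
  fixes p n g :: nat and a b s :: "'a::{field,finite}"
    and i j :: nat
  defines "q \<equiv> p ^ n"
  defines "m \<equiv> (p - 1) div 2"
  defines "Fq \<equiv> {x :: 'a. x ^ q = x}"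
  assumes "prime p" and "p > 2" and "n \<ge> 1"
    and "CARD('a) = q ^ 2" and "CHAR('a) = p"
    and "g \<ge> 1" and "coprime p g"
    and "a \<in> Fq" and "b \<in> Fq" and "b \<noteq> 0"
    and "coprime (hyp_poly g a b) (pderiv (hyp_poly g a b))"
    and "s ^ 2 = b"
    and "1 \<le> i" and "i \<le> g" and "1 \<le> j" and "j \<le> g"
  shows
    "([int i * int p - int j = int m] (mod int g) \<longrightarrow>
        cartier_manin_entry p (hyp_poly g a b) i j =
          s powi (2 * int m + (int m - (int i * int p - int j)) div int g) *
          cartier_manin_entry p (hyp_poly g (a / s) 1) i j
      \<and> cartier_manin_entry p (hyp_poly g (a / s) 1) i j =
          poly (legendre_poly (nat ((int i * int p - int j - int m) div int g))) (- a / (2 * s))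
      \<and> cartier_manin_entry p (hyp_poly g a b) i j \<in> Fq)
     \<and> (\<not> [int i * int p - int j = int m] (mod int g) \<longrightarrow>
        cartier_manin_entry p (hyp_poly g a b) i j = 0)"
proof -
  have p: "p = 2 * m + 1"
    using prime_odd_nat[OF \<open>prime p\<close> \<open>p > 2\<close>] by (auto simp: m_def elim!: oddE)
  have char: "CHAR('a) = 2 * m + 1"
    using \<open>CHAR('a) = p\<close> p by simp
  have "g > 0" "s \<noteq> 0"
    using \<open>g \<ge> 1\<close> \<open>s ^ 2 = b\<close> \<open>b \<noteq> 0\<close> by auto
  define k where "k = int i * int p - int j"
  have entry: "cartier_manin_entry p f i j = cm_coeff p f k" for f :: "'a poly"
    by (simp add: cartier_manin_entry_def k_def)
  show ?thesis
  proof (intro conjI impI)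
    assume "[int i * int p - int j = int m] (mod int g)"
    then obtain t where "t \<le> 2 * m" and kt: "k = int m + int g * int t"
      using cartier_manin_index_decompose[OF p \<open>1 \<le> i\<close> \<open>i \<le> g\<close> \<open>1 \<le> j\<close> \<open>j \<le> g\<close>]
      unfolding k_def by metis
    then have E: "cartier_manin_entry p (hyp_poly g A B) i j = coeff ([:B, A, 1:] ^ m) t" for A B :: 'a
      using \<open>g > 0\<close> by (simp add: entry cm_coeff_hyp_poly[OF \<open>g > 0\<close>, of p, folded m_def] cong_iff_dvd_diff)
    have div: "(int m - k) div int g = - int t" "(k - int m) div int g = int t"
      using \<open>g > 0\<close> by (simp_all add: kt flip: mult_minus_right)
    show "cartier_manin_entry p (hyp_poly g a b) i j =
        s powi (2 * int m + (int m - (int i * int p - int j)) div int g) *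
        cartier_manin_entry p (hyp_poly g (a / s) 1) i j"
      using coeff_quadratic_power_rescale[OF \<open>s \<noteq> 0\<close>, of a m t] \<open>g > 0\<close> \<open>s ^ 2 = b\<close>
      by (simp add: E div flip: k_def)
    show "cartier_manin_entry p (hyp_poly g (a / s) 1) i j =
        poly (legendre_poly (nat ((int i * int p - int j - int m) div int g))) (- a / (2 * s))"
      using coeff_quadratic_power_legendre[OF char \<open>t \<le> 2 * m\<close>, of "a / s"]
      by (simp add: E div mult.commute flip: k_def)
    have Frob: "prime CHAR('a)" "q = CHAR('a) ^ n"
      using \<open>prime p\<close> \<open>CHAR('a) = p\<close> by (simp_all add: q_def)
    have "coeff [:b, a, 1:] l ^ q = coeff [:b, a, 1:] l" for l
      using \<open>a \<in> Fq\<close> \<open>b \<in> Fq\<close> \<open>p > 2\<close>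
      by (auto simp: Fq_def q_def coeff_pCons zero_power split: nat.split)
    then have "coeff ([:b, a, 1:] ^ m) t ^ q = coeff ([:b, a, 1:] ^ m) t"
      by (rule coeff_power_frobenius_fixed[OF Frob])
    then show "cartier_manin_entry p (hyp_poly g a b) i j \<in> Fq"
      by (simp add: E Fq_def)
  next
    assume "\<not> [int i * int p - int j = int m] (mod int g)"
    then show "cartier_manin_entry p (hyp_poly g a b) i j = 0"
      by (simp add: entry cm_coeff_hyp_poly[OF \<open>g > 0\<close>, of p, folded m_def] k_def)
  qed
qed

end
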